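(* Fix an assignment matrix $A$ for which event $\mathcal A$ holds, and let $Q$ be the $m\times m$ matrix with $Q_{ij}=B_{ij}/d$ for $i\ne j$ and $Q_{ii}=1-\frac1d\sum_{k\ne i}B_{ik}$, where $d=\frac32mnp^2$. Then $Q$ is a symmetric stochastic matrix (reversible with respect to the uniform distribution) and $$\mu^*(Q)\ \ge\ \frac13 .$$
   Context: $A\in\{0,1\}^{n\times m}$ is an assignment matrix ($n$ users, $m\ge2$ items), $p\in(0,1]$, $B=A^\top A$. Event $\mathcal A$: $\frac12np^2\le B_{ij}\le\frac32np^2$ for all $i\ne j\in[m]$. For a stochastic matrix $M$ reversible with respect to a positive probability vector (so its eigenvalues are real, $1=\lambda_1\ge\lambda_2\ge\dots\ge\lambda_m$), the spectral gap is $\mu^*(M)=1-\max\{|\lambda_2|,|\lambda_m|\}$. *)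

theory Defs
  imports "Jordan_Normal_Form.Char_Poly" "HOL-Library.Multiset"
begin

(* A is an n x m matrix with 0/1 entries (n users, m items) *)
definition assignment_matrix :: "real mat \<Rightarrow> nat \<Rightarrow> nat \<Rightarrow> bool" where
  "assignment_matrix A n m \<longleftrightarrow> A \<in> carrier_mat n m \<and>
     (\<forall>u<n. \<forall>i<m. A $$ (u,i) \<in> {0,1})"

definition co_occ :: "real mat \<Rightarrow> real mat" where
  "co_occ A = transpose_mat A * A"

definition event_A :: "real mat \<Rightarrow> nat \<Rightarrow> nat \<Rightarrow> real \<Rightarrow> bool" where
  "event_A A n m p \<longleftrightarrow> (\<forall>i<m. \<forall>j<m. i \<noteq> j \<longrightarrow>
      (1/2) * real n * p^2 \<le> co_occ A $$ (i,j) \<and> co_occ A $$ (i,j) \<le> (3/2) * real n * p^2)"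

definition Q_mat :: "real mat \<Rightarrow> nat \<Rightarrow> nat \<Rightarrow> real \<Rightarrow> real mat" where
  "Q_mat A n m p = (let d = (3/2) * real m * real n * p^2 in
     mat m m (\<lambda>(i,j). if i = j then 1 - (1/d) * (\<Sum>k\<in>{0..<m}-{i}. co_occ A $$ (i,k))
                       else co_occ A $$ (i,j) / d))"

definition stochastic_mat :: "real mat \<Rightarrow> bool" where
  "stochastic_mat M \<longleftrightarrow> square_mat M \<and>
     (\<forall>i<dim_row M. \<forall>j<dim_row M. 0 \<le> M $$ (i,j)) \<and>
     (\<forall>i<dim_row M. (\<Sum>j<dim_row M. M $$ (i,j)) = 1)"

definition reversible_wrt :: "real mat \<Rightarrow> (nat \<Rightarrow> real) \<Rightarrow> bool" where
  "reversible_wrt M \<pi> \<longleftrightarrow> (\<forall>i<dim_row M. \<forall>j<dim_row M. \<pi> i * M $$ (i,j) = \<pi> j * M $$ (j,i))"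

definition eigenvalues_desc :: "real mat \<Rightarrow> real list" where
  "eigenvalues_desc M = rev (sorted_list_of_multiset (proots (char_poly M)))"

(* \<mu>*(M) = 1 - max{|\<lambda>_2|, |\<lambda>_m|}, where m = dim M (list indices are 0-based) *)
definition spectral_gap :: "real mat \<Rightarrow> real" where
  "spectral_gap M = (let ev = eigenvalues_desc M; m = dim_row M in
     1 - max \<bar>ev ! 1\<bar> \<bar>ev ! (m - 1)\<bar>)"

end

theory Submission
  imports Defs
begin

text \<open>With \<open>d = 3/2 m n p\<^sup>2\<close>, \<open>Q = I - L/d\<close> for the weighted Laplacian \<open>L\<close> of the co-occurrence
  weights, so \<open>x\<^sup>T Q x = |x|\<^sup>2 - (1/2d) \<Sum>\<^sub>i\<^sub>j B\<^sub>i\<^sub>j (x\<^sub>i - x\<^sub>j)\<^sup>2\<close>. On the event \<open>\<A>\<close> the weights lie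
  between \<open>np\<^sup>2/2\<close> and \<open>3np\<^sup>2/2\<close>, and for \<open>x\<close> orthogonal to the all-ones vector
  \<open>\<Sum>\<^sub>i\<^sub>j (x\<^sub>i - x\<^sub>j)\<^sup>2 = 2m|x|\<^sup>2\<close>; hence \<open>0 \<le> x\<^sup>T Q x \<le> 2/3 |x|\<^sup>2\<close> there. Since the all-ones vector is an
  eigenvector for the eigenvalue 1, the characteristic polynomial of \<open>Q\<close> splits as \<open>(t - 1)\<close>
  times that of the restriction of \<open>Q\<close> to the sum-zero hyperplane, whose (a priori complex)
  eigenvalues are real and lie in \<open>[0, 2/3]\<close> by the Rayleigh-quotient bound. So
  \<open>\<lambda>\<^sub>2, \<lambda>\<^sub>m \<in> [0, 2/3]\<close> and \<open>\<mu>\<^sup>* \<ge> 1/3\<close>.\<close>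

definition quad_form :: "real mat \<Rightarrow> (nat \<Rightarrow> real) \<Rightarrow> real" where
  "quad_form M x = (\<Sum>i<dim_row M. \<Sum>j<dim_row M. M $$ (i,j) * x i * x j)"

definition walk_mat :: "(nat \<Rightarrow> nat \<Rightarrow> real) \<Rightarrow> real \<Rightarrow> nat \<Rightarrow> real mat" where
  "walk_mat w d m = mat m m (\<lambda>(i,j). if i = j then 1 - (1/d) * (\<Sum>k\<in>{0..<m}-{i}. w i k) else w i j / d)"

lemma index_mult_mat_sum:
  assumes "A \<in> carrier_mat m k" "B \<in> carrier_mat k m'" "i < m" "j < m'"
  shows "(A * B) $$ (i,j) = (\<Sum>l<k. A $$ (i,l) * B $$ (l,j))"
  using assms by (simp add: scalar_prod_def lessThan_atLeast0 row_def col_def)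

lemma symmetric_mat_index:
  assumes "transpose_mat M = M" "i < dim_row M" "j < dim_row M"
  shows "M $$ (i,j) = M $$ (j,i)"
proof -
  have "dim_col M = dim_row M" using arg_cong[OF assms(1), of dim_row] by simp
  then show ?thesis using arg_cong[OF assms(1), of "\<lambda>X. X $$ (i,j)"] assms(2,3) by simp
qed

lemma sum_lessThan_if_eq:
  fixes x y :: "'a::comm_ring_1"
  shows "(\<Sum>l<n. (if l = a then x else y)) = (if a < n then x - y else 0) + of_nat n * y"
proof -
  have "(\<Sum>l<n. (if l = a then x else y)) = (\<Sum>l<n. (if l = a then x - y else 0) + y)"
    by (intro sum.cong refl) auto
  then show ?thesis by (simp add: sum.distrib sum.delta' mult.commute)
qed

lemma sum_square_differences:
  fixes x :: "nat \<Rightarrow> real"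
  shows "(\<Sum>k<m. \<Sum>j<m. (x k - x j)^2) = 2 * real m * (\<Sum>k<m. x k ^ 2) - 2 * (\<Sum>k<m. x k)^2"
proof -
  have "(\<Sum>k<m. \<Sum>j<m. (x k - x j)^2) = (\<Sum>k<m. \<Sum>j<m. x k ^ 2 + x j ^ 2 - 2 * (x k * x j))"
    by (intro sum.cong refl) (simp add: power2_eq_square algebra_simps)
  also have "\<dots> = 2 * real m * (\<Sum>k<m. x k ^ 2) - 2 * (\<Sum>k<m. \<Sum>j<m. x k * x j)"
    by (simp add: sum.distrib sum_subtractf sum_distrib_left algebra_simps)
  also have "(\<Sum>k<m. \<Sum>j<m. x k * x j) = (\<Sum>k<m. x k)^2"
    by (simp add: power2_eq_square sum_product)
  finally show ?thesis .
qed

lemma walk_mat_index: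
  "i < m \<Longrightarrow> j < m \<Longrightarrow> walk_mat w d m $$ (i,j) =
     (if i = j then 1 - (1/d) * (\<Sum>k\<in>{0..<m}-{i}. w i k) else w i j / d)"
  by (simp add: walk_mat_def)

lemma dim_walk_mat [simp]: "dim_row (walk_mat w d m) = m" "dim_col (walk_mat w d m) = m"
  by (simp_all add: walk_mat_def)

lemma walk_mat_carrier: "walk_mat w d m \<in> carrier_mat m m"
  by (simp add: walk_mat_def)

lemma walk_mat_symmetric:
  assumes "\<And>i j. i < m \<Longrightarrow> j < m \<Longrightarrow> w i j = w j i"
  shows "transpose_mat (walk_mat w d m) = walk_mat w d m"
  unfolding walk_mat_def by (rule eq_matI) (auto simp: assms)

lemma walk_mat_row_sum:
  assumes "i < m"
  shows "(\<Sum>j<m. walk_mat w d m $$ (i,j)) = 1"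
proof -
  have "(\<Sum>j<m. walk_mat w d m $$ (i,j))
      = walk_mat w d m $$ (i,i) + (\<Sum>j\<in>{0..<m}-{i}. walk_mat w d m $$ (i,j))"
    using assms by (simp add: sum.remove[of _ i] lessThan_atLeast0)
  also have "(\<Sum>j\<in>{0..<m}-{i}. walk_mat w d m $$ (i,j)) = (\<Sum>j\<in>{0..<m}-{i}. w i j) / d"
    unfolding sum_divide_distrib using assms by (intro sum.cong) (auto simp: walk_mat_index)
  finally show ?thesis using assms by (simp add: walk_mat_index)
qed

lemma walk_mat_nonneg:
  assumes "0 < d" "i < m" "j < m"
    and "\<And>i j. i < m \<Longrightarrow> j < m \<Longrightarrow> i \<noteq> j \<Longrightarrow> 0 \<le> w i j"
    and "\<And>i. i < m \<Longrightarrow> (\<Sum>k\<in>{0..<m}-{i}. w i k) \<le> d"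
  shows "0 \<le> walk_mat w d m $$ (i,j)"
  using assms by (auto simp: walk_mat_index field_simps)

lemma quad_form_walk_mat:
  fixes x :: "nat \<Rightarrow> real"
  assumes sym: "\<And>k j. k < m \<Longrightarrow> j < m \<Longrightarrow> w k j = w j k" and d: "d \<noteq> 0"
  defines "W \<equiv> \<lambda>k j. if k = j then 0 else w k j"
  shows "quad_form (walk_mat w d m) x
     = (\<Sum>k<m. x k ^ 2) - (1/(2*d)) * (\<Sum>k<m. \<Sum>j<m. W k j * (x k - x j)^2)"
proof -
  have row: "(\<Sum>l\<in>{0..<m}-{k}. w k l) = (\<Sum>l<m. W k l)" if "k < m" for k
  proof -
    have "(\<Sum>l<m. W k l) = (\<Sum>l\<in>{0..<m}-{k}. W k l) + W k k"
      using that by (subst sum.remove[of _ k]) (auto simp: lessThan_atLeast0 add.commute)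
    then show ?thesis by (simp add: W_def)
  qed
  have "quad_form (walk_mat w d m) x
      = (\<Sum>k<m. \<Sum>j<m. (if k = j then x k ^ 2 else 0)
           - (if k = j then (\<Sum>l<m. W k l) * x k ^ 2 / d else 0) + W k j * x k * x j / d)"
    unfolding quad_form_def
    by (intro sum.cong refl) (auto simp: walk_mat_index row W_def power2_eq_square field_simps)
  also have "\<dots> = (\<Sum>k<m. x k ^ 2) - (1/d) * (\<Sum>k<m. \<Sum>j<m. W k j * x k ^ 2)
                  + (1/d) * (\<Sum>k<m. \<Sum>j<m. W k j * x k * x j)"
    by (simp add: sum.distrib sum_subtractf sum_distrib_left sum_divide_distrib sum_distrib_right
        field_simps)
  finally have form: "quad_form (walk_mat w d m) x = \<dots>" .
  have swap: "(\<Sum>k<m. \<Sum>j<m. W k j * x j ^ 2) = (\<Sum>k<m. \<Sum>j<m. W k j * x k ^ 2)"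
    by (subst sum.swap) (intro sum.cong refl, auto simp: W_def sym)
  have "(\<Sum>k<m. \<Sum>j<m. W k j * (x k - x j)^2)
      = (\<Sum>k<m. \<Sum>j<m. W k j * x k ^ 2 + W k j * x j ^ 2 - 2 * (W k j * x k * x j))"
    by (intro sum.cong refl) (simp add: power2_eq_square algebra_simps)
  also have "\<dots> = 2 * (\<Sum>k<m. \<Sum>j<m. W k j * x k ^ 2) - 2 * (\<Sum>k<m. \<Sum>j<m. W k j * x k * x j)"
    using swap by (simp add: sum.distrib sum_subtractf sum_distrib_left)
  finally have dirichlet: "(\<Sum>k<m. \<Sum>j<m. W k j * (x k - x j)^2) = \<dots>" .
  show ?thesis unfolding form dirichlet using d by (simp add: field_simps)
qed

lemma quad_form_walk_mat_bounds:
  fixes x :: "nat \<Rightarrow> real"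
  assumes sym: "\<And>k j. k < m \<Longrightarrow> j < m \<Longrightarrow> w k j = w j k" and "0 < c"
    and bnd: "\<And>k j. k < m \<Longrightarrow> j < m \<Longrightarrow> k \<noteq> j \<Longrightarrow> c/2 \<le> w k j \<and> w k j \<le> 3/2 * c"
    and d: "d = 3/2 * real m * c" and "m \<ge> 1"
    and sum0: "(\<Sum>k<m. x k) = 0"
  shows "0 \<le> quad_form (walk_mat w d m) x \<and> quad_form (walk_mat w d m) x \<le> 2/3 * (\<Sum>k<m. x k ^ 2)"
proof -
  define W where "W = (\<lambda>k j. if k = j then 0 else w k j)"
  define N where "N = (\<Sum>k<m. x k ^ 2)"
  define S where "S = (\<Sum>k<m. \<Sum>j<m. W k j * (x k - x j)^2)"
  have "d > 0" unfolding d using assms by simp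
  have form: "quad_form (walk_mat w d m) x = N - (1/(2*d)) * S"
    unfolding N_def S_def W_def using sym \<open>d > 0\<close> by (simp add: quad_form_walk_mat)
  have total: "(\<Sum>k<m. \<Sum>j<m. (x k - x j)^2) = 2 * real m * N"
    using sum_square_differences[of x m] sum0 by (simp add: N_def)
  have term_bounds: "c/2 * (x k - x j)^2 \<le> W k j * (x k - x j)^2
      \<and> W k j * (x k - x j)^2 \<le> 3/2 * c * (x k - x j)^2" if "k < m" "j < m" for k j
  proof (cases "k = j")
    case False
    then have "c/2 \<le> W k j" "W k j \<le> 3/2 * c" using bnd[OF that] by (auto simp: W_def)
    then show ?thesis by (meson mult_right_mono zero_le_power2)
  qed (simp add: W_def)
  have "c/2 * (\<Sum>k<m. \<Sum>j<m. (x k - x j)^2) \<le> S"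
    unfolding S_def sum_distrib_left using term_bounds by (intro sum_mono) auto
  then have lower: "c * real m * N \<le> S" using total by (simp add: algebra_simps)
  have "S \<le> 3/2 * c * (\<Sum>k<m. \<Sum>j<m. (x k - x j)^2)"
    unfolding S_def sum_distrib_left using term_bounds by (intro sum_mono) auto
  then have upper: "S \<le> 3 * c * real m * N" using total by (simp add: algebra_simps)
  show ?thesis
    unfolding form N_def[symmetric] using lower upper \<open>d > 0\<close> d by (auto simp: field_simps)
qed

definition deflate :: "real mat \<Rightarrow> real mat" where
  "deflate Q = mat (dim_row Q - 1) (dim_row Q - 1) (\<lambda>(i,j). Q $$ (Suc i, Suc j) - Q $$ (Suc i, 0))"

text \<open>The columns of \<open>sum_zero_basis n\<close> are the all-ones vector followed by the vectors
  \<open>e\<^sub>j - e\<^sub>0\<close>, which span the sum-zero hyperplane; in this basis a matrix with unit row and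
  column sums becomes block diagonal with blocks \<open>1\<close> and \<open>deflate Q\<close>.\<close>
definition sum_zero_basis :: "nat \<Rightarrow> real mat" where
  "sum_zero_basis n = mat (Suc n) (Suc n)
     (\<lambda>(k,j). if j = 0 then 1 else if k = j then 1 else if k = 0 then -1 else 0)"

lemma deflate_carrier: "Q \<in> carrier_mat (Suc n) (Suc n) \<Longrightarrow> deflate Q \<in> carrier_mat n n"
  by (simp add: deflate_def)

lemma deflate_index:
  "Q \<in> carrier_mat (Suc n) (Suc n) \<Longrightarrow> i < n \<Longrightarrow> j < n \<Longrightarrow>
     deflate Q $$ (i,j) = Q $$ (Suc i, Suc j) - Q $$ (Suc i, 0)"
  by (simp add: deflate_def)

lemma sum_zero_basis_carrier: "sum_zero_basis n \<in> carrier_mat (Suc n) (Suc n)"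
  by (simp add: sum_zero_basis_def)

lemma sum_zero_basis_invertible:
  obtains T where "T \<in> carrier_mat (Suc n) (Suc n)"
    "sum_zero_basis n * T = 1\<^sub>m (Suc n)" "T * sum_zero_basis n = 1\<^sub>m (Suc n)"
proof -
  define S where "S = sum_zero_basis n"
  define T where "T = mat (Suc n) (Suc n) (\<lambda>(k,j). if k = 0 then 1 / real (Suc n)
    else if k = j then 1 - 1 / real (Suc n) else - 1 / real (Suc n))"
  have T: "T \<in> carrier_mat (Suc n) (Suc n)" by (simp add: T_def)
  have ST: "S * T = 1\<^sub>m (Suc n)"
  proof (rule eq_matI)
    fix i j assume i: "i < dim_row (1\<^sub>m (Suc n) :: real mat)" and j: "j < dim_col (1\<^sub>m (Suc n) :: real mat)"
    have "(S * T) $$ (i,j) = (\<Sum>l<Suc n. S $$ (i,l) * T $$ (l,j))"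
      using i j by (intro index_mult_mat_sum) (auto simp: S_def sum_zero_basis_def T_def)
    also have "\<dots> = S $$ (i,0) * T $$ (0,j) + (\<Sum>l<n. S $$ (i,Suc l) * T $$ (Suc l,j))"
      by (subst sum.lessThan_Suc_shift) simp
    also have "\<dots> = 1\<^sub>m (Suc n) $$ (i,j)"
    proof -
      have delta: "(if P then 1 else 0) * x = (if P then x else 0)"
        "(if P then 1 else 0) / x = (if P then 1 / x else 0)"
        "- (if P then x else 0) = (if P then - x else 0)" for P and x :: real
        by simp_all
      show ?thesis
      proof (cases i)
        case 0
        then show ?thesis using j
          by (cases j) (auto simp: S_def sum_zero_basis_def T_def sum_negf sum_lessThan_if_eq field_simps)
      next
        case (Suc i')
        then show ?thesis using i j
          by (cases j) (auto simp: S_def sum_zero_basis_def T_def delta sum.delta sum_lessThan_if_eq)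
      qed
    qed
    finally show "(S * T) $$ (i,j) = 1\<^sub>m (Suc n) $$ (i,j)" .
  qed (auto simp: S_def sum_zero_basis_def T_def)
  moreover have "T * S = 1\<^sub>m (Suc n)"
    by (rule mat_mult_left_right_inverse[OF _ T ST]) (simp add: S_def sum_zero_basis_carrier)
  ultimately show ?thesis using that T unfolding S_def by blast
qed

lemma sum_zero_basis_index:
  "i < Suc n \<Longrightarrow> j < Suc n \<Longrightarrow>
     sum_zero_basis n $$ (i,j) = (if j = 0 then 1 else if i = j then 1 else if i = 0 then -1 else 0)"
  by (simp add: sum_zero_basis_def)

lemma index_mult_sum_zero_basis:
  fixes Q :: "real mat"
  assumes Q: "Q \<in> carrier_mat (Suc n) (Suc n)" and i: "i < Suc n" and j: "j < Suc n"
    and row: "(\<Sum>l<Suc n. Q $$ (i,l)) = 1"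
  shows "(Q * sum_zero_basis n) $$ (i,j) = (if j = 0 then 1 else Q $$ (i,j) - Q $$ (i,0))"
proof -
  let ?S = "sum_zero_basis n"
  have "(Q * ?S) $$ (i,j) = Q $$ (i,0) * ?S $$ (0,j) + (\<Sum>l<n. Q $$ (i,Suc l) * ?S $$ (Suc l,j))"
    by (simp only: index_mult_mat_sum[OF Q sum_zero_basis_carrier i j] sum.lessThan_Suc_shift)
  also have "\<dots> = (if j = 0 then 1 else Q $$ (i,j) - Q $$ (i,0))"
  proof (cases j)
    case 0
    then show ?thesis using row by (subst (asm) sum.lessThan_Suc_shift) (simp add: sum_zero_basis_index)
  next
    case (Suc j')
    have "(\<Sum>l<n. Q $$ (i,Suc l) * ?S $$ (Suc l,j)) = (\<Sum>l<n. if l = j' then Q $$ (i,Suc l) else 0)"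
      using j Suc by (intro sum.cong refl) (auto simp: sum_zero_basis_index)
    then show ?thesis using j Suc by (simp add: sum_zero_basis_index sum.delta)
  qed
  finally show ?thesis .
qed

lemma mult_sum_zero_basis:
  fixes Q :: "real mat"
  assumes Q: "Q \<in> carrier_mat (Suc n) (Suc n)"
    and rows: "\<And>i. i < Suc n \<Longrightarrow> (\<Sum>j<Suc n. Q $$ (i,j)) = 1"
    and cols: "\<And>j. j < Suc n \<Longrightarrow> (\<Sum>i<Suc n. Q $$ (i,j)) = 1"
  shows "Q * sum_zero_basis n
       = sum_zero_basis n * four_block_mat (1\<^sub>m 1) (0\<^sub>m 1 n) (0\<^sub>m n 1) (deflate Q)"
proof -
  define S where "S = sum_zero_basis n"
  define M where "M = four_block_mat (1\<^sub>m 1) (0\<^sub>m 1 n) (0\<^sub>m n 1) (deflate Q)"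
  have R: "deflate Q \<in> carrier_mat n n" using Q by (rule deflate_carrier)
  have S: "S \<in> carrier_mat (Suc n) (Suc n)" unfolding S_def by (rule sum_zero_basis_carrier)
  have M: "M \<in> carrier_mat (Suc n) (Suc n)" unfolding M_def using R by auto
  have Mentry: "M $$ (i,j) = (if i = 0 then (if j = 0 then 1 else 0)
      else if j = 0 then 0 else Q $$ (i, j) - Q $$ (i, 0))"
    if "i < Suc n" "j < Suc n" for i j
    using that R Q unfolding M_def by (subst index_mat_four_block) (auto simp: deflate_index)
  have cols': "Q $$ (0,k) + (\<Sum>l<n. Q $$ (Suc l, k)) = 1" if "k < Suc n" for k
    using cols[OF that] by (subst (asm) sum.lessThan_Suc_shift) simp
  have "Q * S = S * M"
  proof (rule eq_matI)
    fix i j assume "i < dim_row (S * M)" "j < dim_col (S * M)"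
    then have i: "i < Suc n" and j: "j < Suc n" using S M by auto
    have "(S * M) $$ (i,j) = S $$ (i,0) * M $$ (0,j) + (\<Sum>l<n. S $$ (i,Suc l) * M $$ (Suc l,j))"
      by (simp only: index_mult_mat_sum[OF S M i j] sum.lessThan_Suc_shift)
    also have "\<dots> = (if j = 0 then 1 else Q $$ (i,j) - Q $$ (i,0))"
    proof (cases "i = 0")
      case True
      have "(\<Sum>l<n. S $$ (i,Suc l) * M $$ (Suc l,j))
          = (if j = 0 then 0 else - (\<Sum>l<n. Q $$ (Suc l, j) - Q $$ (Suc l, 0)))"
        using True j by (cases j) (simp_all add: S_def sum_zero_basis_index Mentry sum_negf[symmetric])
      also have "\<dots> = (if j = 0 then 0 else Q $$ (0,j) - Q $$ (0,0))"
        using cols'[OF j] cols'[of 0] by (simp add: sum_subtractf)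
      finally show ?thesis using True j by (simp add: S_def sum_zero_basis_index Mentry)
    next
      case False
      have "(\<Sum>l<n. S $$ (i,Suc l) * M $$ (Suc l,j)) = (\<Sum>l<n. if l = i - 1 then M $$ (i,j) else 0)"
        using False i by (intro sum.cong refl) (auto simp: S_def sum_zero_basis_index)
      also have "\<dots> = M $$ (i,j)" using False i by (simp add: sum.delta)
      finally show ?thesis using False i j by (simp add: S_def sum_zero_basis_index Mentry)
    qed
    also have "\<dots> = (Q * S) $$ (i,j)"
      unfolding S_def using index_mult_sum_zero_basis[OF Q i j rows[OF i]] ..
    finally show "(Q * S) $$ (i,j) = (S * M) $$ (i,j)" by simp
  qed (use Q S M in auto)
  then show ?thesis unfolding S_def M_def .
qed

lemma char_poly_deflate:
  fixes Q :: "real mat"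
  assumes Q: "Q \<in> carrier_mat (Suc n) (Suc n)"
    and rows: "\<And>i. i < Suc n \<Longrightarrow> (\<Sum>j<Suc n. Q $$ (i,j)) = 1"
    and cols: "\<And>j. j < Suc n \<Longrightarrow> (\<Sum>i<Suc n. Q $$ (i,j)) = 1"
  shows "char_poly Q = [:-1, 1:] * char_poly (deflate Q)"
proof -
  define S where "S = sum_zero_basis n"
  define M where "M = four_block_mat (1\<^sub>m 1) (0\<^sub>m 1 n) (0\<^sub>m n 1) (deflate Q)"
  obtain T where T: "T \<in> carrier_mat (Suc n) (Suc n)" and ST: "S * T = 1\<^sub>m (Suc n)"
    and TS: "T * S = 1\<^sub>m (Suc n)"
    unfolding S_def by (rule sum_zero_basis_invertible)
  have R: "deflate Q \<in> carrier_mat n n" using Q by (rule deflate_carrier)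
  have S: "S \<in> carrier_mat (Suc n) (Suc n)" by (simp add: S_def sum_zero_basis_carrier)
  have M: "M \<in> carrier_mat (Suc n) (Suc n)" unfolding M_def using R by auto
  have "Q = Q * S * T" using Q S T ST by (simp add: assoc_mult_mat[of Q _ _ S _ T])
  also have "Q * S = S * M" unfolding S_def M_def using Q rows cols by (rule mult_sum_zero_basis)
  finally have "similar_mat Q M" by (intro similar_matI[OF _ ST TS]) (use Q S T M in auto)
  then have "char_poly Q = char_poly M" by (rule char_poly_similar)
  also have "\<dots> = char_poly (1\<^sub>m 1) * char_poly (deflate Q)" unfolding M_def
    by (rule char_poly_four_block_zeros_col) (use R in auto)
  also have "char_poly (1\<^sub>m 1 :: real mat) = [:-1, 1:]"
    by (subst char_poly_upper_triangular[of _ 1]) (auto simp: diag_mat_def upper_triangular_def)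
  finally show ?thesis .
qed

lemma sum_zero_eigenvalue_real_bounded:
  fixes Q :: "real mat" and u :: "nat \<Rightarrow> complex"
  assumes Q: "Q \<in> carrier_mat m m" and sym: "transpose_mat Q = Q"
    and bound: "\<And>x. (\<Sum>k<m. x k) = 0 \<Longrightarrow> \<bar>quad_form Q x\<bar> \<le> \<beta> * (\<Sum>k<m. x k ^ 2)"
    and eigen: "\<And>k. k < m \<Longrightarrow> (\<Sum>j<m. of_real (Q $$ (k,j)) * u j) = lam * u k"
    and sum0: "(\<Sum>k<m. u k) = 0" and "i < m" "u i \<noteq> 0"
  shows "\<exists>r. lam = of_real r \<and> \<bar>r\<bar> \<le> \<beta>"
proof -
  define a where "a = (\<lambda>k. Re (u k))"
  define b where "b = (\<lambda>k. Im (u k))"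
  have Qsym: "Q $$ (k,j) = Q $$ (j,k)" if "k < m" "j < m" for k j
    using symmetric_mat_index[OF sym] that Q by simp
  have sum_a: "(\<Sum>k<m. a k) = 0" using arg_cong[OF sum0, of Re] by (simp add: a_def Re_sum)
  have sum_b: "(\<Sum>k<m. b k) = 0" using arg_cong[OF sum0, of Im] by (simp add: b_def Im_sum)
  define N where "N = (\<Sum>k<m. a k ^ 2) + (\<Sum>k<m. b k ^ 2)"
  have "a i ^ 2 + b i ^ 2 > 0"
    using \<open>u i \<noteq> 0\<close> by (auto simp: a_def b_def complex_eq_iff sum_power2_gt_zero_iff)
  moreover have "a i ^ 2 + b i ^ 2 \<le> (\<Sum>k<m. a k ^ 2 + b k ^ 2)"
    by (rule member_le_sum) (use \<open>i < m\<close> in auto)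
  ultimately have "N > 0" by (simp add: N_def sum.distrib)
  text \<open>The Hermitian form \<open>u\<^sup>* Q u\<close> equals \<open>lam |u|\<^sup>2\<close> by the eigen-equation, and
    \<open>aQa + bQb\<close> by the symmetry of \<open>Q\<close>.\<close>
  define Z where "Z = (\<Sum>k<m. \<Sum>j<m. of_real (Q $$ (k,j)) * (cnj (u k) * u j))"
  have "Z = (\<Sum>k<m. cnj (u k) * (\<Sum>j<m. of_real (Q $$ (k,j)) * u j))"
    unfolding Z_def by (simp add: sum_distrib_left mult_ac)
  also have "\<dots> = (\<Sum>k<m. lam * (cnj (u k) * u k))" by (intro sum.cong refl) (simp add: eigen)
  also have "\<dots> = (\<Sum>k<m. lam * of_real (a k ^ 2 + b k ^ 2))"
    by (intro sum.cong refl) (simp add: a_def b_def complex_mult_cnj mult.commute)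
  also have "\<dots> = lam * of_real N"
    unfolding N_def sum.distrib[symmetric] by (simp add: sum_distrib_left)
  finally have Z_eigen: "Z = lam * of_real N" .
  have "Re Z = quad_form Q a + quad_form Q b"
    using Q unfolding Z_def quad_form_def
    by (simp add: Re_sum a_def b_def sum.distrib[symmetric] algebra_simps)
  moreover have "Im Z = 0"
  proof -
    have "Im Z = (\<Sum>k<m. \<Sum>j<m. Q $$ (k,j) * (a k * b j)) - (\<Sum>k<m. \<Sum>j<m. Q $$ (k,j) * (b k * a j))"
      unfolding Z_def by (simp add: Im_sum a_def b_def sum_subtractf[symmetric] algebra_simps)
    also have "(\<Sum>k<m. \<Sum>j<m. Q $$ (k,j) * (b k * a j)) = (\<Sum>k<m. \<Sum>j<m. Q $$ (k,j) * (a k * b j))"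
      by (subst sum.swap) (intro sum.cong refl, auto simp: Qsym mult_ac)
    finally show ?thesis by simp
  qed
  ultimately have "lam = of_real ((quad_form Q a + quad_form Q b) / N)"
    using Z_eigen \<open>N > 0\<close> by (simp add: complex_eq_iff field_simps)
  moreover have "\<bar>quad_form Q a + quad_form Q b\<bar> \<le> \<beta> * N"
    using bound[OF sum_a] bound[OF sum_b] unfolding N_def by (simp add: distrib_left)
  then have "\<bar>(quad_form Q a + quad_form Q b) / N\<bar> \<le> \<beta>"
    using \<open>N > 0\<close> by (simp add: field_simps)
  ultimately show ?thesis by blast
qed

text \<open>The lift \<open>u\<close> is the vector \<open>\<Sum>\<^sub>i v\<^sub>i (e\<^sub>i\<^sub>+\<^sub>1 - e\<^sub>0)\<close>.\<close>
lemma deflate_eigenvector_lift: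
  fixes Q :: "real mat" and v :: "nat \<Rightarrow> complex"
  assumes Q: "Q \<in> carrier_mat (Suc n) (Suc n)"
    and cols: "\<And>j. j < Suc n \<Longrightarrow> (\<Sum>i<Suc n. Q $$ (i,j)) = 1"
    and eigen: "\<And>i. i < n \<Longrightarrow> (\<Sum>j<n. of_real (deflate Q $$ (i,j)) * v j) = lam * v i"
  defines "u \<equiv> \<lambda>k. if k = 0 then - (\<Sum>i<n. v i) else v (k - 1)"
  shows "\<And>k. k < Suc n \<Longrightarrow> (\<Sum>j<Suc n. of_real (Q $$ (k,j)) * u j) = lam * u k"
    and "(\<Sum>k<Suc n. u k) = 0"
proof -
  show "(\<Sum>k<Suc n. u k) = 0" unfolding u_def by (subst sum.lessThan_Suc_shift) simp
  fix k assume k: "k < Suc n"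
  have "(\<Sum>j<Suc n. of_real (Q $$ (k,j)) * u j)
      = (\<Sum>j<n. of_real (Q $$ (k, Suc j) - Q $$ (k, 0)) * v j)"
    by (subst sum.lessThan_Suc_shift)
       (simp add: u_def sum_distrib_left sum_distrib_right sum_subtractf algebra_simps sum_negf)
  also have "\<dots> = lam * u k"
  proof (cases k)
    case (Suc k')
    then show ?thesis using eigen[of k'] k Q by (simp add: u_def deflate_index)
  next
    case 0
    have cols': "Q $$ (0,j) + (\<Sum>l<n. Q $$ (Suc l, j)) = 1" if "j < Suc n" for j
      using cols[OF that] by (subst (asm) sum.lessThan_Suc_shift) simp
    have "(\<Sum>j<n. of_real (Q $$ (0, Suc j) - Q $$ (0, 0)) * v j)
        = (\<Sum>j<n. - (\<Sum>l<n. of_real (deflate Q $$ (l,j)) * v j))"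
    proof (intro sum.cong refl)
      fix j assume "j \<in> {..<n}"
      then have "Q $$ (0, Suc j) - Q $$ (0, 0) = - (\<Sum>l<n. deflate Q $$ (l,j))"
        using cols'[of "Suc j"] cols'[of 0] Q by (simp add: deflate_index sum_subtractf)
      then show "of_real (Q $$ (0, Suc j) - Q $$ (0, 0)) * v j
          = - (\<Sum>l<n. of_real (deflate Q $$ (l,j)) * v j)"
        by (simp add: sum_distrib_right)
    qed
    also have "\<dots> = - (\<Sum>l<n. \<Sum>j<n. of_real (deflate Q $$ (l,j)) * v j)"
      unfolding sum_negf by (subst sum.swap) simp
    also have "\<dots> = - (\<Sum>l<n. lam * v l)"
      by (simp add: eigen)
    finally show ?thesis using 0 by (simp add: u_def sum_distrib_left)
  qed
  finally show "(\<Sum>j<Suc n. of_real (Q $$ (k,j)) * u j) = lam * u k" .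
qed

lemma char_poly_real_roots_factorization:
  fixes R :: "real mat"
  assumes R: "R \<in> carrier_mat n n"
    and real_roots: "\<And>a. eigenvalue (map_mat complex_of_real R) a \<Longrightarrow> \<exists>r. a = of_real r \<and> P r"
  obtains bs where "length bs = n" "char_poly R = (\<Prod>b\<leftarrow>bs. [:- b, 1:])" "\<forall>b\<in>set bs. P b"
proof -
  define Rc where "Rc = map_mat complex_of_real R"
  have Rc: "Rc \<in> carrier_mat n n" unfolding Rc_def using R by simp
  obtain as where as: "char_poly Rc = (\<Prod>a\<leftarrow>as. [:- a, 1:])" and "length as = n"
    using char_poly_factorized[OF Rc] by blast
  have roots: "\<exists>r. a = of_real r \<and> P r" if "a \<in> set as" for a
  proof -
    have "poly (char_poly Rc) a = 0" unfolding as using that by (rule linear_poly_root)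
    then show ?thesis using real_roots eigenvalue_root_char_poly[OF Rc] unfolding Rc_def by blast
  qed
  define bs where "bs = map Re as"
  have as_bs: "as = map of_real bs"
    unfolding bs_def using roots by (induction as) (auto, metis Re_complex_of_real)
  interpret of_real_poly: map_poly_inj_comm_ring_hom "of_real :: real \<Rightarrow> complex" ..
  have "char_poly Rc = map_poly of_real (char_poly R)"
    unfolding Rc_def by (rule of_real_hom.char_poly_hom[OF R])
  then have "map_poly of_real (char_poly R) = map_poly (of_real :: real \<Rightarrow> complex) (\<Prod>b\<leftarrow>bs. [:- b, 1:])"
    unfolding as as_bs of_real_poly.hom_prod_list by (simp add: o_def)
  then have "char_poly R = (\<Prod>b\<leftarrow>bs. [:- b, 1:])" by simp
  moreover have "\<forall>b\<in>set bs. P b" using roots unfolding bs_def by fastforce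
  moreover have "length bs = n" using \<open>length as = n\<close> by (simp add: bs_def)
  ultimately show ?thesis using that by blast
qed

lemma eigenvalues_desc_top_one:
  fixes Q :: "real mat"
  assumes cp: "char_poly Q = [:-1, 1:] * (\<Prod>b\<leftarrow>bs. [:- b, 1:])" and le1: "\<forall>b\<in>set bs. b \<le> 1"
  shows "eigenvalues_desc Q = 1 # rev (sort bs)"
proof -
  have "proots (\<Prod>b\<leftarrow>bs. [:- b, 1:]) = sum_list (map proots (map (\<lambda>b. [:- b, 1:]) bs))"
    by (subst proots_prod_list[symmetric]) (auto simp: o_def)
  also have "\<dots> = mset bs" by (induction bs) (auto simp: proots_linear_factor)
  finally have proots_Q: "proots (char_poly Q) = mset (bs @ [1])"
    unfolding cp by (subst proots_mult) (auto simp: prod_list_zero_iff proots_linear_factor)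
  have "sort (bs @ [1]) = sort bs @ [1]"
    by (rule properties_for_sort) (use le1 in \<open>simp_all add: sorted_append\<close>)
  then show ?thesis unfolding eigenvalues_desc_def proots_Q sorted_list_of_multiset_mset by simp
qed

lemma spectral_gap_ge_of_quad_form_bound:
  fixes Q :: "real mat"
  assumes Q: "Q \<in> carrier_mat m m" and "2 \<le> m" and sym: "transpose_mat Q = Q"
    and rows: "\<And>i. i < m \<Longrightarrow> (\<Sum>j<m. Q $$ (i,j)) = 1"
    and bound: "\<And>x. (\<Sum>k<m. x k) = 0 \<Longrightarrow> \<bar>quad_form Q x\<bar> \<le> \<beta> * (\<Sum>k<m. x k ^ 2)"
    and "\<beta> \<le> 1"
  shows "1 - \<beta> \<le> spectral_gap Q"
proof -
  obtain n where m: "m = Suc n" and "1 \<le> n" using \<open>2 \<le> m\<close> by (cases m) auto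
  have Qn: "Q \<in> carrier_mat (Suc n) (Suc n)" using Q m by simp
  have R: "deflate Q \<in> carrier_mat n n" using Qn by (rule deflate_carrier)
  have cols: "(\<Sum>i<Suc n. Q $$ (i,j)) = 1" if "j < Suc n" for j
  proof -
    have "(\<Sum>i<Suc n. Q $$ (i,j)) = (\<Sum>i<Suc n. Q $$ (j,i))"
      using that Qn symmetric_mat_index[OF sym] by (intro sum.cong refl) auto
    then show ?thesis using rows that m by simp
  qed
  have real_eigen: "\<exists>r. a = of_real r \<and> \<bar>r\<bar> \<le> \<beta>"
    if eigenvalue: "eigenvalue (map_mat complex_of_real (deflate Q)) a" for a
  proof -
    obtain v where "eigenvector (map_mat complex_of_real (deflate Q)) v a"
      using eigenvalue unfolding eigenvalue_def by blast
    then have v: "v \<in> carrier_vec n" and "v \<noteq> 0\<^sub>v n"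
      and ev: "map_mat complex_of_real (deflate Q) *\<^sub>v v = a \<cdot>\<^sub>v v"
      unfolding eigenvector_def using R by auto
    have eigen: "(\<Sum>j<n. of_real (deflate Q $$ (i,j)) * v $ j) = a * v $ i" if "i < n" for i
      using arg_cong[OF ev, of "\<lambda>w. w $ i"] that v R
      by (simp add: scalar_prod_def lessThan_atLeast0 row_def)
    obtain i where i: "i < n" "v $ i \<noteq> 0"
      using \<open>v \<noteq> 0\<^sub>v n\<close> v by (metis eq_vecI carrier_vecD index_zero_vec)
    define u where "u = (\<lambda>k. if k = 0 then - (\<Sum>i<n. v $ i) else v $ (k - 1))"
    note lift = deflate_eigenvector_lift[of Q n "\<lambda>j. v $ j" a, OF Qn cols eigen, folded u_def]
    show ?thesis
      by (rule sum_zero_eigenvalue_real_bounded[of Q m \<beta> u a "Suc i"])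
         (use Q sym bound lift i m in \<open>auto simp: u_def\<close>)
  qed
  obtain bs where "length bs = n" and cp: "char_poly (deflate Q) = (\<Prod>b\<leftarrow>bs. [:- b, 1:])"
    and bs: "\<forall>b\<in>set bs. \<bar>b\<bar> \<le> \<beta>"
    using char_poly_real_roots_factorization[OF R real_eigen] by blast
  have ev: "eigenvalues_desc Q = 1 # rev (sort bs)"
    using char_poly_deflate[OF Qn _ cols] rows bs \<open>\<beta> \<le> 1\<close> m
    by (intro eigenvalues_desc_top_one) (auto simp: cp)
  have "eigenvalues_desc Q ! Suc k \<in> set bs" if "k < n" for k
    using nth_mem[of k "rev (sort bs)"] that \<open>length bs = n\<close> by (simp add: ev)
  moreover obtain k where "n = Suc k" using \<open>1 \<le> n\<close> by (cases n) auto
  ultimately have "eigenvalues_desc Q ! 1 \<in> set bs" "eigenvalues_desc Q ! (m - 1) \<in> set bs"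
    using m by auto
  then show ?thesis using bs Q unfolding spectral_gap_def Let_def by auto
qed

lemma stochastic_walk_mat:
  assumes "0 < c" and d: "d = 3/2 * real m * c"
    and bnd: "\<And>i j. i < m \<Longrightarrow> j < m \<Longrightarrow> i \<noteq> j \<Longrightarrow> c/2 \<le> w i j \<and> w i j \<le> 3/2 * c"
  shows "stochastic_mat (walk_mat w d m)"
proof -
  have row_weight: "(\<Sum>k\<in>{0..<m}-{i}. w i k) \<le> d" if "i < m" for i
  proof -
    have "(\<Sum>k\<in>{0..<m}-{i}. w i k) \<le> real (card ({0..<m}-{i})) * (3/2 * c)"
      by (rule sum_bounded_above) (use bnd that in auto)
    also have "\<dots> \<le> d" using that \<open>0 < c\<close> by (simp add: d of_nat_diff)
    finally show ?thesis .
  qed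
  have weight_nonneg: "0 \<le> w i j" if "i < m" "j < m" "i \<noteq> j" for i j
    using bnd[OF that] \<open>0 < c\<close> by linarith
  have "0 \<le> walk_mat w d m $$ (i,j)" if "i < m" "j < m" for i j
  proof (rule walk_mat_nonneg[OF _ that weight_nonneg row_weight])
    show "0 < d" using that \<open>0 < c\<close> by (simp add: d)
  qed
  then show ?thesis unfolding stochastic_mat_def using walk_mat_row_sum by auto
qed

lemma spectral_gap_walk_mat:
  assumes sym: "\<And>i j. i < m \<Longrightarrow> j < m \<Longrightarrow> w i j = w j i" and "0 < c"
    and bnd: "\<And>i j. i < m \<Longrightarrow> j < m \<Longrightarrow> i \<noteq> j \<Longrightarrow> c/2 \<le> w i j \<and> w i j \<le> 3/2 * c"
    and d: "d = 3/2 * real m * c" and "2 \<le> m"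
  shows "1/3 \<le> spectral_gap (walk_mat w d m)"
proof -
  have form_bound: "\<bar>quad_form (walk_mat w d m) x\<bar> \<le> 2/3 * (\<Sum>k<m. x k ^ 2)"
    if "(\<Sum>k<m. x k) = 0" for x
    using quad_form_walk_mat_bounds[where w = w and m = m, OF sym \<open>0 < c\<close> bnd d _ that] \<open>2 \<le> m\<close>
    by linarith
  have "1 - 2/3 \<le> spectral_gap (walk_mat w d m)"
    by (rule spectral_gap_ge_of_quad_form_bound[OF walk_mat_carrier \<open>2 \<le> m\<close>
          walk_mat_symmetric[OF sym] walk_mat_row_sum form_bound]) simp_all
  then show ?thesis by simp
qed

lemma reversible_uniform_of_symmetric:
  "transpose_mat M = M \<Longrightarrow> reversible_wrt M (\<lambda>_. c)"
  unfolding reversible_wrt_def by (simp add: symmetric_mat_index)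

lemma co_occ_symmetric:
  assumes "A \<in> carrier_mat n m" "i < m" "j < m"
  shows "co_occ A $$ (i,j) = co_occ A $$ (j,i)"
proof (rule symmetric_mat_index)
  show "transpose_mat (co_occ A) = co_occ A"
    using assms(1) unfolding co_occ_def by (subst transpose_mult[of _ m n]) auto
qed (use assms in \<open>simp_all add: co_occ_def\<close>)

lemma Q_mat_walk_mat:
  "Q_mat A n m p = walk_mat (\<lambda>i j. co_occ A $$ (i,j)) ((3/2) * real m * real n * p^2) m"
  unfolding Q_mat_def walk_mat_def Let_def ..

theorem mainTheorem8:
  fixes A :: "real mat" and n m :: nat and p :: real
  assumes "n \<ge> 1" and "m \<ge> 2"
    and "0 < p" and "p \<le> 1"
    and "assignment_matrix A n m"
    and "event_A A n m p"
  shows "Q_mat A n m p = transpose_mat (Q_mat A n m p)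
       \<and> stochastic_mat (Q_mat A n m p)
       \<and> reversible_wrt (Q_mat A n m p) (\<lambda>_. 1 / real m)
       \<and> spectral_gap (Q_mat A n m p) \<ge> 1/3"
proof -
  define w where "w i j = co_occ A $$ (i,j)" for i j
  define c where "c = real n * p^2"
  define d where "d = 3/2 * real m * c"
  have Q: "Q_mat A n m p = walk_mat w d m"
    unfolding Q_mat_walk_mat w_def d_def c_def by (simp add: mult.assoc)
  have "c > 0" using assms by (simp add: c_def)
  have w_sym: "w i j = w j i" if "i < m" "j < m" for i j
    using assms(5) that unfolding assignment_matrix_def w_def by (metis co_occ_symmetric)
  have w_bounds: "c/2 \<le> w i j \<and> w i j \<le> 3/2 * c" if "i < m" "j < m" "i \<noteq> j" for i j
    using assms(6) that unfolding event_A_def w_def c_def by (auto simp: mult.assoc)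
  have symmetric: "transpose_mat (walk_mat w d m) = walk_mat w d m"
    using w_sym by (rule walk_mat_symmetric)
  show ?thesis
    unfolding Q
    using symmetric reversible_uniform_of_symmetric[OF symmetric]
      stochastic_walk_mat[OF \<open>c > 0\<close> d_def w_bounds]
      spectral_gap_walk_mat[OF w_sym \<open>c > 0\<close> w_bounds d_def \<open>m \<ge> 2\<close>]
    by simp
qed

end
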